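(* Let $M=\{0\}\cup\{2^{-n}:n\in\mathbb{N}\}\subseteq\mathbb{R}$ and $K=M\times[0,1]\subseteq\mathbb{R}^2$. Then $C^1(K)\neq C^1(\mathbb{R}^2|K)$, i.e. there is $f\in C^1(K)$ which is not the restriction to $K$ of any $C^1$ function on $\mathbb{R}^2$.
   Context: $C^1(K)$ is the set of $f:K\to\mathbb{R}$ admitting a continuous $df:K\to\mathbb{R}^2$ with $\lim_{y\to x,\,y\in K\setminus\{x\}}\frac{f(y)-f(x)-\langle df(x),y-x\rangle}{|y-x|}=0$ for all $x\in K$. $C^1(\mathbb{R}^2|K)=\{g|_K: g\in C^1(\mathbb{R}^2)\}$. *)

theory Defs
  imports "HOL-Analysis.Analysis"
begin

definition C1_on :: "(real \<times> real) set \<Rightarrow> ((real \<times> real) \<Rightarrow> real) \<Rightarrow> bool" where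
  "C1_on K f \<longleftrightarrow> (\<exists>df :: (real \<times> real) \<Rightarrow> (real \<times> real).
      continuous_on K df \<and>
      (\<forall>x\<in>K. ((\<lambda>y. (f y - f x - inner (df x) (y - x)) / norm (y - x))
               \<longlongrightarrow> 0) (at x within K - {x})))"

definition C1_R2 :: "((real \<times> real) \<Rightarrow> real) \<Rightarrow> bool" where
  "C1_R2 g \<longleftrightarrow> (\<exists>dg :: (real \<times> real) \<Rightarrow> (real \<times> real).
      (\<forall>x. (g has_derivative (\<lambda>h. inner (dg x) h)) (at x)) \<and>
      continuous_on UNIV dg)"

definition C1_restr :: "(real \<times> real) set \<Rightarrow> ((real \<times> real) \<Rightarrow> real) set" where
  "C1_restr K = {f. \<exists>g. C1_R2 g \<and> (\<forall>x\<in>K. f x = g x)}"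

end

theory Submission
  imports Defs
begin

text \<open>The function \<open>f(x,t) = x\<^sup>2t\<^sup>2 / (x\<^sup>2 + t\<^sup>4)\<close> equals \<open>t\<^sup>2/2\<close> on the parabola \<open>x = t\<^sup>2\<close>,
  \<open>t\<^sup>2/5\<close> on \<open>x = t\<^sup>2/2\<close> and \<open>0\<close> on \<open>t = 0\<close>. On \<open>K\<close> every column \<open>{2\<^sup>-\<^sup>n} \<times> [0,1]\<close> is
  relatively open, so there \<open>f\<close> only has to be differentiable in \<open>t\<close>; its \<open>t\<close>-derivative
  is bounded by \<open>2|t|\<close> and hence extends continuously by \<open>0\<close> to the column \<open>x = 0\<close>, where
  \<open>f\<close> vanishes to first order. So \<open>f \<in> C\<^sup>1(K)\<close> with \<open>df = (0, \<partial>\<^sub>tf)\<close>.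
  A \<open>C\<^sup>1\<close> extension \<open>g\<close>, however, would have horizontal difference quotients
  between \<open>x = s\<^sup>2/2\<close> and \<open>x = s\<^sup>2\<close> equal to \<open>3/5\<close> at height \<open>t = s\<close> and \<open>0\<close> at height
  \<open>t = 0\<close>; as \<open>s = 2\<^sup>-\<^sup>m \<rightarrow> 0\<close> both converge to \<open>\<partial>\<^sub>xg(0,0)\<close>.\<close>

lemma has_real_derivative_partial_fst:
  fixes g :: "real \<times> real \<Rightarrow> real"
  assumes "(g has_derivative (\<lambda>h. inner d h)) (at (x, t))"
  shows "((\<lambda>x. g (x, t)) has_real_derivative fst d) (at x)"
proof -
  have "((\<lambda>x. (x, t)) has_derivative (\<lambda>h. (h, 0))) (at x)"
    by (auto intro!: derivative_eq_intros)
  from diff_chain_at[OF this assms]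
  have "((\<lambda>x. g (x, t)) has_derivative (\<lambda>h. inner d (h, 0))) (at x)"
    by (simp add: o_def)
  moreover have "(\<lambda>h. inner d (h, 0)) = (*) (fst d)"
    by (auto simp: fun_eq_iff inner_prod_def split_beta)
  ultimately show ?thesis by (simp add: has_field_derivative_def)
qed

lemma horizontal_difference_quotient_tendsto:
  fixes g :: "real \<times> real \<Rightarrow> real"
  assumes deriv: "\<And>z. (g has_derivative (\<lambda>h. inner (dg z) h)) (at z)"
    and cont: "isCont dg (x, t)"
    and u: "u \<longlonglongrightarrow> x" and v: "v \<longlonglongrightarrow> x" and b: "b \<longlonglongrightarrow> t"
    and less: "\<And>n. u n < v n"
  shows "(\<lambda>n. (g (v n, b n) - g (u n, b n)) / (v n - u n)) \<longlonglongrightarrow> fst (dg (x, t))"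
proof -
  have "\<exists>\<xi>. u n < \<xi> \<and> \<xi> < v n \<and>
      g (v n, b n) - g (u n, b n) = (v n - u n) * fst (dg (\<xi>, b n))" for n
    using MVT2[OF less[of n], of "\<lambda>x. g (x, b n)" "\<lambda>x. fst (dg (x, b n))"]
      has_real_derivative_partial_fst[OF deriv] by blast
  then obtain \<xi> where \<xi>: "\<And>n. u n < \<xi> n" "\<And>n. \<xi> n < v n"
    and mvt: "\<And>n. g (v n, b n) - g (u n, b n) = (v n - u n) * fst (dg (\<xi> n, b n))"
    by metis
  have "\<xi> \<longlonglongrightarrow> x"
    by (rule real_tendsto_sandwich[OF _ _ u v])
      (use \<xi> in \<open>auto intro!: always_eventually less_imp_le\<close>)
  then have "(\<lambda>n. fst (dg (\<xi> n, b n))) \<longlonglongrightarrow> fst (dg (x, t))"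
    by (intro tendsto_fst isCont_tendsto_compose[OF cont] tendsto_Pair b)
  moreover have "(g (v n, b n) - g (u n, b n)) / (v n - u n) = fst (dg (\<xi> n, b n))" for n
    using mvt[of n] less[of n] by simp
  ultimately show ?thesis by simp
qed

lemma Whitney_remainder_tendsto_locally_vertical:
  fixes f :: "real \<times> real \<Rightarrow> real"
  assumes deriv: "((\<lambda>t. f (x, t)) has_real_derivative d) (at t)"
    and "r > 0" and vertical: "\<forall>y\<in>K. dist y (x, t) < r \<longrightarrow> fst y = x"
  shows "((\<lambda>y. (f y - f (x, t) - inner (0, d) (y - (x, t))) / norm (y - (x, t))) \<longlongrightarrow> 0)
           (at (x, t) within K - {(x, t)})"
proof -
  define p where "p = (x, t)"
  define G where "G = (\<lambda>y::real \<times> real. f (x, snd y))"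
  have "((\<lambda>t. f (x, t)) has_derivative (\<lambda>h. d * h)) (at (snd p) within snd ` (K - {p}))"
    using deriv unfolding has_field_derivative_def p_def by (simp add: has_derivative_at_withinI)
  then have "((\<lambda>t. f (x, t)) \<circ> snd has_derivative (\<lambda>h. d * h) \<circ> snd) (at p within K - {p})"
    by (rule diff_chain_within[OF has_derivative_snd[OF has_derivative_ident]])
  then have "(G has_derivative (\<lambda>h. inner (0, d) h)) (at p within K - {p})"
    by (simp add: G_def o_def inner_prod_def split_beta)
  then have G: "((\<lambda>y. (G y - G p - inner (0, d) (y - p)) /\<^sub>R norm (y - p)) \<longlongrightarrow> 0)
      (at p within K - {p})"
    by (simp add: has_derivative_at_within)
  have "\<forall>\<^sub>F y in at p within K - {p}. (G y - G p - inner (0, d) (y - p)) /\<^sub>R norm (y - p)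
     = (f y - f p - inner (0, d) (y - p)) / norm (y - p)"
    unfolding eventually_at
  proof (intro exI[of _ r] conjI ballI impI)
    fix y assume "y \<in> K - {p}" "y \<noteq> p \<and> dist y p < r"
    then have "G y = f y" "G p = f p"
      using vertical unfolding G_def p_def by (auto simp: prod_eq_iff)
    then show "(G y - G p - inner (0, d) (y - p)) /\<^sub>R norm (y - p)
        = (f y - f p - inner (0, d) (y - p)) / norm (y - p)"
      by (simp add: divide_inverse mult.commute)
  qed (fact \<open>r > 0\<close>)
  from Lim_transform_eventually[OF G this] show ?thesis unfolding p_def .
qed

definition cusp :: "real \<times> real \<Rightarrow> real" where
  "cusp y = fst y ^ 2 * snd y ^ 2 / (fst y ^ 2 + snd y ^ 4)"

definition cusp_dt :: "real \<times> real \<Rightarrow> real" where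
  "cusp_dt y = 2 * fst y ^ 2 * snd y * (fst y ^ 2 - snd y ^ 4) / (fst y ^ 2 + snd y ^ 4) ^ 2"

lemma cusp_denominator_pos:
  fixes y :: "real \<times> real"
  assumes "y \<noteq> 0" shows "fst y ^ 2 + snd y ^ 4 > 0"
proof -
  have "fst y \<noteq> 0 \<or> snd y \<noteq> 0" using assms by (simp add: prod_eq_iff)
  then have "fst y ^ 2 > 0 \<or> snd y ^ 4 > 0" by auto
  moreover have "fst y ^ 2 \<ge> 0" "snd y ^ 4 \<ge> 0" by simp_all
  ultimately show ?thesis by linarith
qed

lemma cusp_nonneg: "cusp y \<ge> 0"
  unfolding cusp_def by simp

lemma cusp_le_snd_sq: "cusp y \<le> snd y ^ 2"
proof (cases "y = 0")
  case False
  have "fst y ^ 2 * snd y ^ 2 \<le> snd y ^ 2 * (fst y ^ 2 + snd y ^ 4)"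
    by (simp add: algebra_simps)
  then show ?thesis
    using cusp_denominator_pos[OF False] unfolding cusp_def by (simp add: divide_le_eq)
qed (simp add: cusp_def)

lemma cusp_le_quotient: "snd y \<noteq> 0 \<Longrightarrow> cusp y \<le> fst y ^ 2 / snd y ^ 2"
proof -
  assume "snd y \<noteq> 0"
  then have "cusp y \<le> fst y ^ 2 * snd y ^ 2 / snd y ^ 4"
    unfolding cusp_def by (intro frac_le) auto
  also have "\<dots> = fst y ^ 2 / snd y ^ 2"
    using \<open>snd y \<noteq> 0\<close> by (simp add: power4_eq_xxxx power2_eq_square)
  finally show ?thesis .
qed

lemma abs_cusp_dt_le: "\<bar>cusp_dt y\<bar> \<le> 2 * \<bar>snd y\<bar>"
proof (cases "y = 0")
  case False
  define x t where "x = fst y" and "t = snd y"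
  have pos: "x^2 + t^4 > 0"
    using cusp_denominator_pos[OF False] unfolding x_def t_def .
  have "0 \<le> x^2" "0 \<le> t^4" by simp_all
  then have "\<bar>x^2 - t^4\<bar> \<le> x^2 + t^4" by arith
  then have "\<bar>cusp_dt y\<bar> \<le> 2 * x^2 * \<bar>t\<bar> * (x^2 + t^4) / (x^2 + t^4)^2"
    unfolding cusp_dt_def x_def [symmetric] t_def [symmetric]
    by (simp add: abs_mult divide_right_mono mult_left_mono)
  also have "\<dots> = 2 * \<bar>t\<bar> * (x^2 / (x^2 + t^4))"
    using pos by (simp add: power2_eq_square)
  also have "\<dots> \<le> 2 * \<bar>t\<bar>"
    using pos by (intro mult_left_le) simp_all
  finally show ?thesis by (simp add: t_def)
qed (simp add: cusp_dt_def)

lemma isCont_cusp_dt: "isCont cusp_dt p"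
proof (cases "p = 0")
  case True
  have "((\<lambda>y. 2 * \<bar>snd y\<bar>) \<longlongrightarrow> 2 * \<bar>snd p\<bar>) (at p)"
    by (intro tendsto_intros)
  then have "(cusp_dt \<longlongrightarrow> 0) (at p)"
    using True abs_cusp_dt_le Lim_null_comparison[OF always_eventually, of cusp_dt "\<lambda>y. 2 * \<bar>snd y\<bar>"]
    by simp
  then show ?thesis using True by (simp add: isCont_def cusp_dt_def)
next
  case False
  then show ?thesis
    using cusp_denominator_pos[OF False] unfolding cusp_dt_def by (intro continuous_intros) auto
qed

lemma has_real_derivative_cusp_dt:
  assumes "x \<noteq> 0"
  shows "((\<lambda>t. cusp (x, t)) has_real_derivative cusp_dt (x, t)) (at t)"
proof -
  have pos: "x^2 + t^4 > 0" for t :: real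
    using assms by (simp add: add_pos_nonneg)
  have "((\<lambda>t. x^2 * t^2 / (x^2 + t^4)) has_real_derivative
      ((x^2 * (2 * t)) * (x^2 + t^4) - x^2 * t^2 * (4 * t^3)) / (x^2 + t^4)^2) (at t)"
    using pos[of t] by (auto intro!: derivative_eq_intros simp: power2_eq_square)
  moreover have "((x^2 * (2 * t)) * (x^2 + t^4) - x^2 * t^2 * (4 * t^3)) / (x^2 + t^4)^2
      = cusp_dt (x, t)"
    unfolding cusp_dt_def
    by (simp add: algebra_simps power2_eq_square power4_eq_xxxx power3_eq_cube)
  ultimately show ?thesis by (simp add: cusp_def)
qed

lemma cusp_flat_on_vertical_axis:
  "((\<lambda>y. cusp y / norm (y - (0, t))) \<longlongrightarrow> 0) (at (0, t) within S)"
proof (cases "t = 0")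
  case True
  have bound: "norm (cusp y / norm (y - (0, t))) \<le> \<bar>snd y\<bar>" for y :: "real \<times> real"
  proof (cases "snd y = 0")
    case False
    have "\<bar>snd y\<bar> \<le> norm (y - (0, t))"
      using True norm_snd_le[of "snd y" "fst y"] by (simp add: zero_prod_def [symmetric])
    then have "cusp y / norm (y - (0, t)) \<le> \<bar>snd y\<bar> ^ 2 / \<bar>snd y\<bar>"
      using False cusp_le_snd_sq[of y] cusp_nonneg[of y] by (intro frac_le) auto
    also have "\<bar>snd y\<bar> ^ 2 / \<bar>snd y\<bar> = \<bar>snd y\<bar>"
      using False by (metis abs_0_eq nonzero_mult_div_cancel_left power2_eq_square)
    finally show ?thesis using cusp_nonneg[of y] by simp
  qed (simp add: cusp_def)
  have "((\<lambda>y. \<bar>snd y\<bar>) \<longlongrightarrow> \<bar>snd (0::real, t)\<bar>) (at (0, t) within S)"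
    by (intro tendsto_intros)
  then show ?thesis
    using True bound by (rule_tac Lim_null_comparison) simp_all
next
  case False
  have bound: "norm (cusp y / norm (y - (0, t))) \<le> \<bar>fst y\<bar> / snd y ^ 2"
    for y :: "real \<times> real"
  proof (cases "fst y = 0 \<or> snd y = 0")
    case nonzero: False
    have "\<bar>fst y\<bar> \<le> norm (y - (0, t))"
      using norm_fst_le[of "fst y" "snd y - t"] by (cases y) simp
    then have "cusp y / norm (y - (0, t)) \<le> cusp y / \<bar>fst y\<bar>"
      using nonzero cusp_nonneg[of y] by (intro divide_left_mono) (auto intro!: mult_pos_pos)
    also have "\<dots> \<le> (fst y ^ 2 / snd y ^ 2) / \<bar>fst y\<bar>"
      using nonzero cusp_le_quotient[of y] by (intro divide_right_mono) auto
    also have "\<dots> = \<bar>fst y\<bar> / snd y ^ 2"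
      using nonzero by (simp add: power2_eq_square divide_simps)
    finally show ?thesis using cusp_nonneg[of y] by simp
  next
    case degenerate: True
    then have "cusp y = 0" by (auto simp: cusp_def)
    then show ?thesis by simp
  qed
  have "((\<lambda>y. \<bar>fst y\<bar> / snd y ^ 2) \<longlongrightarrow> \<bar>fst (0::real, t)\<bar> / snd (0::real, t) ^ 2)
      (at (0, t) within S)"
    using False by (intro tendsto_intros) auto
  then show ?thesis
    using bound by (rule_tac Lim_null_comparison) simp_all
qed

lemma cusp_horizontal_difference_quotients:
  assumes "t \<noteq> 0"
  shows "(cusp (t^2, t) - cusp (t^2 / 2, t)) / (t^2 - t^2 / 2) = 3/5"
    and "(cusp (t^2, 0) - cusp (t^2 / 2, 0)) / (t^2 - t^2 / 2) = 0"
  using assms by (auto simp: cusp_def field_simps power2_eq_square power4_eq_xxxx)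

lemma cusp_on_vertical_axis: "cusp (0, t) = 0" and cusp_dt_on_vertical_axis: "cusp_dt (0, t) = 0"
  by (simp_all add: cusp_def cusp_dt_def)

lemma half_power_isolated:
  assumes "y \<in> {0} \<union> range (\<lambda>m. (1/2::real) ^ m)" and close: "\<bar>y - (1/2) ^ n\<bar> < (1/2) ^ n / 2"
  shows "y = (1/2) ^ n"
proof -
  obtain m where m: "y = (1/2) ^ m"
    using assms by auto
  have halving: "k < l \<Longrightarrow> 2 * (1/2::real) ^ l \<le> (1/2) ^ k" for k l
    using power_decreasing[of "Suc k" l "1/2::real"] by simp
  have pos: "(1/2::real) ^ n > 0" by simp
  have "m = n"
  proof (cases m n rule: linorder_cases)
    case less
    then show ?thesis using close pos halving[of m n] unfolding m abs_less_iff by linarith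
  next
    case greater
    then show ?thesis using close pos halving[of n m] unfolding m abs_less_iff by linarith
  qed
  then show ?thesis using m by simp
qed

lemma C1_on_cusp:
  assumes K: "K \<subseteq> ({0} \<union> range (\<lambda>n. (1/2::real) ^ n)) \<times> UNIV"
  shows "C1_on K cusp"
  unfolding C1_on_def
proof (intro exI[of _ "\<lambda>y. (0, cusp_dt y)"] conjI ballI)
  show "continuous_on K (\<lambda>y. (0, cusp_dt y))"
    by (intro continuous_on_Pair continuous_on_const continuous_at_imp_continuous_on ballI
        isCont_cusp_dt)
  fix p assume "p \<in> K"
  obtain x t where p: "p = (x, t)" by fastforce
  have "x \<in> {0} \<union> range (\<lambda>n. (1/2) ^ n)"
    using K \<open>p \<in> K\<close> unfolding p by blast
  then consider "x = 0" | n where "x = (1/2) ^ n" by blast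
  then show "((\<lambda>y. (cusp y - cusp p - inner (0, cusp_dt p) (y - p)) / norm (y - p)) \<longlongrightarrow> 0)
      (at p within K - {p})"
  proof cases
    case 1
    then show ?thesis
      using cusp_flat_on_vertical_axis[of t]
      by (simp add: p cusp_on_vertical_axis cusp_dt_on_vertical_axis inner_prod_def)
  next
    case (2 n)
    have "fst y = x" if "y \<in> K" "dist y (x, t) < x / 2" for y
    proof -
      have "y \<in> ({0} \<union> range (\<lambda>n. (1/2) ^ n)) \<times> UNIV"
        using K that(1) by blast
      then have "fst y \<in> {0} \<union> range (\<lambda>n. (1/2) ^ n)"
        by (simp add: mem_Times_iff)
      moreover have "\<bar>fst y - x\<bar> < x / 2"
        using dist_fst_le[of y "(x, t)"] that(2) by (simp add: dist_real_def)
      ultimately show ?thesis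
        using half_power_isolated[of "fst y" n] 2 by simp
    qed
    moreover have "x \<noteq> 0" "x / 2 > 0" using 2 by simp_all
    ultimately show ?thesis
      unfolding p
      by (intro Whitney_remainder_tendsto_locally_vertical[where r = "x / 2"] has_real_derivative_cusp_dt)
        auto
  qed
qed

lemma cusp_not_restriction_of_C1:
  assumes "C1_R2 g" and agree: "\<forall>y \<in> range (\<lambda>n. (1/2::real) ^ n) \<times> {0..1}. g y = cusp y"
  shows False
proof -
  obtain dg where deriv: "\<And>z. (g has_derivative (\<lambda>h. inner (dg z) h)) (at z)"
    and "continuous_on UNIV dg"
    using assms(1) unfolding C1_R2_def by blast
  then have cont: "isCont dg (0, 0)"
    by (simp add: continuous_on_eq_continuous_at)
  define s :: "nat \<Rightarrow> real" where "s m = (1/2) ^ m" for m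
  have s_pos: "s m > 0" for m
    by (simp add: s_def)
  have s: "s \<longlonglongrightarrow> 0"
    unfolding s_def by (rule LIMSEQ_power_zero) simp
  have powers: "s m ^ 2 = (1/2) ^ (2 * m)" "s m ^ 2 / 2 = (1/2) ^ Suc (2 * m)" for m
    by (simp_all add: s_def power_mult mult.commute)
  have heights: "b \<in> {0..1}" if "b \<in> {0, s m}" for m b
    using that s_pos[of m] by (auto simp: s_def power_le_one)
  have column: "((1/2::real) ^ k, b) \<in> range (\<lambda>n. (1/2) ^ n) \<times> {0..1}" if "b \<in> {0..1}" for k b
    using that by blast
  have agree_at: "g (s m ^ 2, b) = cusp (s m ^ 2, b)" "g (s m ^ 2 / 2, b) = cusp (s m ^ 2 / 2, b)"
    if "b \<in> {0, s m}" for m b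
    unfolding powers(2) unfolding powers(1) by (fact agree[rule_format, OF column[OF heights[OF that]]])+
  have limit: "(\<lambda>m. (g (s m ^ 2, b m) - g (s m ^ 2 / 2, b m)) / (s m ^ 2 - s m ^ 2 / 2))
      \<longlonglongrightarrow> fst (dg (0, 0))" if "b \<longlonglongrightarrow> 0" for b
  proof (rule horizontal_difference_quotient_tendsto[OF deriv cont _ _ that])
    show "(\<lambda>m. s m ^ 2 / 2) \<longlonglongrightarrow> 0" "(\<lambda>m. s m ^ 2) \<longlonglongrightarrow> 0"
      using tendsto_divide[OF tendsto_power[OF s, of 2] tendsto_const[of 2]]
        tendsto_power[OF s, of 2]
      by simp_all
    show "s m ^ 2 / 2 < s m ^ 2" for m
      using s_pos[of m] by simp
  qed
  have on_diagonal: "(\<lambda>m. 3/5 :: real) \<longlonglongrightarrow> fst (dg (0, 0))"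
  proof (rule Lim_transform_eventually[OF limit[OF s] always_eventually], rule allI)
    fix m
    show "(g (s m ^ 2, s m) - g (s m ^ 2 / 2, s m)) / (s m ^ 2 - s m ^ 2 / 2) = 3/5"
      using cusp_horizontal_difference_quotients(1)[of "s m"] s_pos[of m]
      by (simp add: agree_at[of "s m" m])
  qed
  have on_axis: "(\<lambda>m. 0 :: real) \<longlonglongrightarrow> fst (dg (0, 0))"
  proof (rule Lim_transform_eventually[OF limit[OF tendsto_const] always_eventually], rule allI)
    fix m
    show "(g (s m ^ 2, 0) - g (s m ^ 2 / 2, 0)) / (s m ^ 2 - s m ^ 2 / 2) = 0"
      using cusp_horizontal_difference_quotients(2)[of "s m"] s_pos[of m]
      by (simp add: agree_at[of 0 m])
  qed
  from LIMSEQ_unique[OF tendsto_const on_diagonal] LIMSEQ_unique[OF tendsto_const on_axis]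
  show False by simp
qed

theorem mainTheorem13:
  fixes M :: "real set" and K :: "(real \<times> real) set"
  assumes "M = {0} \<union> {(1/2) ^ n | n :: nat. True}"
      and "K = M \<times> {0..1}"
  shows "\<exists>f. C1_on K f \<and> f \<notin> C1_restr K"
proof (intro exI conjI)
  have K: "K = ({0} \<union> range (\<lambda>n. (1/2::real) ^ n)) \<times> {0..1}"
    using assms by auto
  then show "C1_on K cusp"
    by (intro C1_on_cusp) auto
  show "cusp \<notin> C1_restr K"
  proof
    assume "cusp \<in> C1_restr K"
    then obtain g where "C1_R2 g" "\<forall>y\<in>K. cusp y = g y"
      unfolding C1_restr_def by blast
    with K show False
      by (intro cusp_not_restriction_of_C1[of g]) auto
  qed
qed

end
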